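(* Let $n$ be an even nonnegative integer, and let $\mathbf n=\mathbf n_1\cdots\mathbf n_r$ be the block decomposition of its minimal hyperbinary expansion ($r=0$ if $n=0$). Let $(a_1,\dots,a_r)$ be the lengths of the blocks as words, and let $(t_1,\dots,t_r)\in\{1,2\}^r$ be their types. Define functions on triples of integers: \[b_1(\alpha,\beta,\sigma)=\alpha\beta+\sigma,\qquad b_2(\alpha,\beta,\sigma)=\beta+\alpha\sigma,\] \[s_1(\alpha,\beta,\sigma)=(\alpha-1)\beta+\sigma,\qquad s_2(\alpha,\beta,\sigma)=\sigma.\] Set $h_0=k_0=1$, and for $i\in\{0,\dots,r-1\}$ set \[h_{i+1}=b_{t_{r-i}}(a_{r-i},h_i,k_i),\qquad k_{i+1}=s_{t_{r-i}}(a_{r-i},h_i,k_i).\] Then $b(n)=h_r$.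
   Context: A hyperbinary expansion of a nonnegative integer $m$ is a word $x_0\cdots x_k$ over $\{0,1,2\}$ with $x_0\ne0$ and $\sum_i x_i2^{k-i}=m$; the empty word is the unique hyperbinary expansion of $0$. $b(m)$ is the number of hyperbinary expansions of $m$. The minimal hyperbinary expansion of $m$ is its unique hyperbinary expansion with no digit $0$. A block of type $1$ is a word $1^t2$ (length $t+1$) and a block of type $2$ is a word $2^t$ (length $t$), with $t\ge1$. The minimal hyperbinary expansion of a positive even integer can be written uniquely as a concatenation of blocks with no two consecutive blocks of type $2$; this is its block decomposition. *)

theory Defs
  imports Main
begin

definition hval :: "nat list \<Rightarrow> nat" where
  "hval xs = (\<Sum>i<length xs. xs ! i * 2 ^ (length xs - 1 - i))"

definition is_hyperexp :: "nat \<Rightarrow> nat list \<Rightarrow> bool" where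
  "is_hyperexp m xs \<longleftrightarrow> set xs \<subseteq> {0,1,2} \<and> (xs \<noteq> [] \<longrightarrow> hd xs \<noteq> 0) \<and> hval xs = m"

definition hb :: "nat \<Rightarrow> nat" where
  "hb m = card {xs. is_hyperexp m xs}"

fun block_word :: "nat \<times> nat \<Rightarrow> nat list" where
  "block_word (ty, t) = (if ty = 1 then replicate t 1 @ [2] else replicate t 2)"

definition valid_blocks :: "(nat \<times> nat) list \<Rightarrow> bool" where
  "valid_blocks bs \<longleftrightarrow> (\<forall>b\<in>set bs. fst b \<in> {1,2} \<and> snd b \<ge> 1) \<and>
     (\<forall>i. Suc i < length bs \<longrightarrow> \<not> (fst (bs ! i) = 2 \<and> fst (bs ! Suc i) = 2))"

definition block_len :: "nat \<times> nat \<Rightarrow> int" where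
  "block_len b = int (length (block_word b))"

definition bfun :: "nat \<Rightarrow> int \<Rightarrow> int \<Rightarrow> int \<Rightarrow> int" where
  "bfun ty \<alpha> \<beta> \<sigma> = (if ty = 1 then \<alpha> * \<beta> + \<sigma> else \<beta> + \<alpha> * \<sigma>)"

definition sfun :: "nat \<Rightarrow> int \<Rightarrow> int \<Rightarrow> int \<Rightarrow> int" where
  "sfun ty \<alpha> \<beta> \<sigma> = (if ty = 1 then (\<alpha> - 1) * \<beta> + \<sigma> else \<sigma>)"

definition hk_step :: "nat \<times> nat \<Rightarrow> int \<times> int \<Rightarrow> int \<times> int" where
  "hk_step b hk = (bfun (fst b) (block_len b) (fst hk) (snd hk),
                   sfun (fst b) (block_len b) (fst hk) (snd hk))"

text \<open>(h_r, k_r): blocks processed from the last one to the first, starting at (1,1).\<close>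
definition hk :: "(nat \<times> nat) list \<Rightarrow> int \<times> int" where
  "hk bs = foldr hk_step bs (1, 1)"

end

theory Submission
  imports Defs
begin

text \<open>Removing the last digit of an expansion of 2j+1 leaves an expansion of j, and removing
  the last digit of an expansion of 2j+2 leaves one of j+1 (digit 0) or of j (digit 2); hence
  b(2j+1) = b(j) and b(2j+2) = b(j+1) + b(j). So appending a digit 1 or 2 to a word of value v
  acts on the pair (b(v), b(v+1)) by a unimodular 2x2 matrix, and b(v) is read off the product
  of the digit matrices. The block matrices have closed forms, and (h_i, k_i) encode the first
  row of the product over the last i blocks.\<close>

lemma hval_Nil [simp]: "hval [] = 0"
  by (simp add: hval_def)

lemma hval_Cons: "hval (x # xs) = x * 2 ^ length xs + hval xs"
  unfolding hval_def length_Cons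
  by (simp del: sum.lessThan_Suc add: sum.lessThan_Suc_shift)

lemma hval_snoc [simp]: "hval (xs @ [x]) = 2 * hval xs + x"
  by (induction xs) (auto simp: hval_Cons algebra_simps)

lemma hval_pos: "xs \<noteq> [] \<Longrightarrow> hd xs \<noteq> 0 \<Longrightarrow> hval xs > 0"
  by (cases xs) (auto simp: hval_Cons)

lemma is_hyperexp_append_digit:
  "is_hyperexp j ys \<Longrightarrow> d \<in> {0,1,2} \<Longrightarrow> (ys = [] \<longrightarrow> d \<noteq> 0) \<Longrightarrow>
    is_hyperexp (2 * j + d) (ys @ [d])"
  by (auto simp: is_hyperexp_def hd_append)

lemma is_hyperexp_snoc:
  "is_hyperexp m (ys @ [d]) \<longleftrightarrow>
     d \<in> {0,1,2} \<and> m = 2 * hval ys + d \<and> is_hyperexp (hval ys) ys \<and> (ys = [] \<longrightarrow> d \<noteq> 0)"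
  by (auto simp: is_hyperexp_def hd_append)

definition hyperexps :: "nat \<Rightarrow> nat list set" where
  "hyperexps m = {xs. is_hyperexp m xs}"

lemma hb_eq_card_hyperexps: "hb m = card (hyperexps m)"
  by (simp add: hb_def hyperexps_def)

lemma hyperexps_0: "hyperexps 0 = {[]}"
  using hval_pos by (fastforce simp: hyperexps_def is_hyperexp_def)

lemma hyperexps_pos_snocE:
  assumes "xs \<in> hyperexps m" and "m > 0"
  obtains ys d where "xs = ys @ [d]" and "is_hyperexp m (ys @ [d])"
proof -
  have "xs \<noteq> []" using assms by (auto simp: hyperexps_def is_hyperexp_def)
  then show thesis using assms that by (cases xs rule: rev_cases) (auto simp: hyperexps_def)
qed

lemma hyperexps_odd: "hyperexps (2 * j + 1) = (\<lambda>ys. ys @ [1]) ` hyperexps j"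
proof
  show "hyperexps (2 * j + 1) \<subseteq> (\<lambda>ys. ys @ [1]) ` hyperexps j"
  proof
    fix xs assume "xs \<in> hyperexps (2 * j + 1)"
    then obtain ys d where xs: "xs = ys @ [d]" and e: "is_hyperexp (2 * j + 1) (ys @ [d])"
      by (rule hyperexps_pos_snocE) simp
    have "d \<in> {0,1,2}" "2 * j + 1 = 2 * hval ys + d"
      using e by (simp_all add: is_hyperexp_snoc)
    then have "d = 1" "hval ys = j" by auto presburger+
    with e have "ys \<in> hyperexps j" by (auto simp: is_hyperexp_snoc hyperexps_def)
    with xs \<open>d = 1\<close> show "xs \<in> (\<lambda>ys. ys @ [1]) ` hyperexps j" by blast
  qed
qed (auto simp: hyperexps_def intro: is_hyperexp_append_digit[of j _ 1, simplified])

lemma hyperexps_even: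
  "hyperexps (2 * j + 2) = (\<lambda>ys. ys @ [0]) ` hyperexps (j + 1) \<union> (\<lambda>ys. ys @ [2]) ` hyperexps j"
proof
  show "hyperexps (2 * j + 2) \<subseteq> (\<lambda>ys. ys @ [0]) ` hyperexps (j + 1) \<union> (\<lambda>ys. ys @ [2]) ` hyperexps j"
  proof
    fix xs assume "xs \<in> hyperexps (2 * j + 2)"
    then obtain ys d where xs: "xs = ys @ [d]" and e: "is_hyperexp (2 * j + 2) (ys @ [d])"
      by (rule hyperexps_pos_snocE) simp
    have "d \<in> {0,1,2}" "2 * j + 2 = 2 * hval ys + d"
      using e by (simp_all add: is_hyperexp_snoc)
    then have "d = 0 \<and> hval ys = j + 1 \<or> d = 2 \<and> hval ys = j" by auto presburger
    then have "d = 0 \<and> ys \<in> hyperexps (j + 1) \<or> d = 2 \<and> ys \<in> hyperexps j"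
      using e by (auto simp: is_hyperexp_snoc hyperexps_def)
    with xs show "xs \<in> (\<lambda>ys. ys @ [0]) ` hyperexps (j + 1) \<union> (\<lambda>ys. ys @ [2]) ` hyperexps j"
      by blast
  qed
next
  have "ys \<noteq> []" if "ys \<in> hyperexps (j + 1)" for ys
    using that by (auto simp: hyperexps_def is_hyperexp_def)
  then show "(\<lambda>ys. ys @ [0]) ` hyperexps (j + 1) \<union> (\<lambda>ys. ys @ [2]) ` hyperexps j
      \<subseteq> hyperexps (2 * j + 2)"
    using is_hyperexp_append_digit[of "j + 1" _ 0] is_hyperexp_append_digit[of j _ 2]
    by (auto simp: hyperexps_def)
qed

lemma finite_hyperexps: "finite (hyperexps m)"
proof (induction m rule: less_induct)
  case (less m)
  consider "m = 0" | j where "m = 2 * j + 1" | j where "m = 2 * j + 2"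
  proof -
    have "m = 0 \<or> (\<exists>j. m = 2 * j + 1) \<or> (\<exists>j. m = 2 * j + 2)" by presburger
    then show thesis using that by blast
  qed
  then show ?case
  proof cases
    case 1
    then show ?thesis by (simp add: hyperexps_0)
  next
    case (2 j)
    then show ?thesis using less.IH[of j] hyperexps_odd[of j] by simp
  next
    case (3 j)
    then show ?thesis using less.IH[of j] less.IH[of "j + 1"] hyperexps_even[of j] by simp
  qed
qed

lemma hb_0: "hb 0 = 1"
  by (simp add: hb_eq_card_hyperexps hyperexps_0)

lemma hb_odd: "hb (2 * j + 1) = hb j"
  unfolding hb_eq_card_hyperexps hyperexps_odd
  by (rule card_image) (simp add: inj_on_def)

lemma hb_1: "hb 1 = 1"
  using hb_odd[of 0] hb_0 by simp

lemma hb_even: "hb (2 * j + 2) = hb (j + 1) + hb j"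
proof -
  have "hb (2 * j + 2) =
      card ((\<lambda>ys. ys @ [0]) ` hyperexps (j + 1)) + card ((\<lambda>ys. ys @ [2]) ` hyperexps j)"
    unfolding hb_eq_card_hyperexps hyperexps_even
    by (rule card_Un_disjoint) (auto simp: finite_hyperexps)
  also have "\<dots> = hb (j + 1) + hb j"
    by (simp add: hb_eq_card_hyperexps card_image inj_on_def)
  finally show ?thesis .
qed

text \<open>A 2x2 integer matrix with rows (a, b) and (c, d) is the tuple (a, b, c, d).\<close>
type_synonym mat2 = "int \<times> int \<times> int \<times> int"

fun mat2_mult :: "mat2 \<Rightarrow> mat2 \<Rightarrow> mat2" where
  "mat2_mult (a, b, c, d) (e, f, g, h) = (a * e + b * g, a * f + b * h, c * e + d * g, c * f + d * h)"

lemma mat2_mult_assoc: "mat2_mult (mat2_mult x y) z = mat2_mult x (mat2_mult y z)"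
  by (cases x rule: prod_cases4; cases y rule: prod_cases4; cases z rule: prod_cases4)
     (simp add: algebra_simps)

lemma mat2_mult_one_right [simp]: "mat2_mult x (1, 0, 0, 1) = x"
  by (cases x rule: prod_cases4) simp

definition digit_mat :: "nat \<Rightarrow> mat2" where
  "digit_mat d = (if d = 1 then (1, 0, 1, 1) else (1, 1, 0, 1))"

text \<open>The first digit of the word contributes the rightmost factor.\<close>
fun word_mat :: "nat list \<Rightarrow> mat2" where
  "word_mat [] = (1, 0, 0, 1)"
| "word_mat (d # w) = mat2_mult (word_mat w) (digit_mat d)"

lemma word_mat_append: "word_mat (w @ v) = mat2_mult (word_mat v) (word_mat w)"
  by (induction w) (simp_all add: mat2_mult_assoc)

lemma hb_word_mat:
  assumes "set w \<subseteq> {1,2}" and "word_mat w = (a, b, c, d)"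
  shows "int (hb (hval w)) = a + b \<and> int (hb (hval w + 1)) = c + d"
  using assms
proof (induction w arbitrary: a b c d rule: rev_induct)
  case Nil
  then show ?case by (simp add: hb_0 hb_1[simplified])
next
  case (snoc x w)
  obtain a' b' c' d' where m: "word_mat w = (a', b', c', d')"
    by (cases "word_mat w" rule: prod_cases4)
  with snoc have IH: "int (hb (hval w)) = a' + b'" "int (hb (hval w + 1)) = c' + d'"
    by auto
  from snoc.prems have "x = 1 \<or> x = 2" by auto
  then show ?case
  proof
    assume "x = 1"
    with snoc.prems m have "(a, b, c, d) = (a', b', a' + c', b' + d')"
      by (simp add: word_mat_append digit_mat_def)
    with \<open>x = 1\<close> IH show ?thesis
      using hb_odd[of "hval w"] hb_even[of "hval w"] by simp
  next
    assume "x = 2"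
    with snoc.prems m have "(a, b, c, d) = (a' + c', b' + d', c', d')"
      by (simp add: word_mat_append digit_mat_def)
    with \<open>x = 2\<close> IH show ?thesis
      using hb_even[of "hval w"] hb_odd[of "hval w + 1"] by (simp add: algebra_simps)
  qed
qed

lemma word_mat_replicate_1: "word_mat (replicate t 1) = (1, 0, int t, 1)"
  by (induction t) (auto simp: digit_mat_def)

lemma word_mat_replicate_2: "word_mat (replicate t 2) = (1, int t, 0, 1)"
  by (induction t) (auto simp: digit_mat_def)

lemma word_mat_block_word:
  "word_mat (block_word (ty, t)) =
     (if ty = 1 then (1 + int t, 1, int t, 1) else (1, int t, 0, 1))"
  using word_mat_replicate_1[of t]
  by (simp add: word_mat_append word_mat_replicate_2 digit_mat_def)

lemma block_len_eq: "block_len (ty, t) = (if ty = 1 then int t + 1 else int t)"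
  by (simp add: block_len_def)

lemma hk_word_mat:
  assumes "word_mat (concat (map block_word bs)) = (a, b, c, d)"
  shows "hk bs = (a + b, a)"
  using assms
proof (induction bs arbitrary: a b c d)
  case Nil
  then show ?case by (simp add: hk_def)
next
  case (Cons bl bs)
  obtain ty t where bl: "bl = (ty, t)" by (cases bl)
  obtain a' b' c' d' where m: "word_mat (concat (map block_word bs)) = (a', b', c', d')"
    by (cases "word_mat (concat (map block_word bs))" rule: prod_cases4)
  have "hk (bl # bs) = hk_step bl (a' + b', a')"
    using Cons.IH[OF m] by (simp add: hk_def)
  moreover have "(a, b, c, d) = mat2_mult (a', b', c', d') (word_mat (block_word bl))"
    using Cons.prems m by (simp add: word_mat_append)
  ultimately show ?case
    by (auto simp del: block_word.simps
        simp: bl word_mat_block_word block_len_eq hk_step_def bfun_def sfun_def algebra_simps)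
qed

theorem mainTheorem13:
  fixes n :: nat and w :: "nat list" and bs :: "(nat \<times> nat) list"
  assumes "even n"
    and "is_hyperexp n w" and "0 \<notin> set w"
    and "valid_blocks bs" and "concat (map block_word bs) = w"
  shows "int (hb n) = fst (hk bs)"
proof -
  obtain a b c d where m: "word_mat w = (a, b, c, d)"
    by (cases "word_mat w" rule: prod_cases4)
  have "set w \<subseteq> {1,2}" and "hval w = n"
    using assms(2,3) by (auto simp: is_hyperexp_def)
  then have "int (hb n) = a + b"
    using hb_word_mat m by blast
  moreover have "hk bs = (a + b, a)"
    using hk_word_mat m assms(5) by simp
  ultimately show ?thesis by simp
qed

end
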